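(* Let $n\ge 1$ and let $p_1,\dots,p_n$ be distinct primes with $p_i\equiv 3$ or $7\pmod{20}$ for all $i$. Put $d=\prod_{i=1}^n(-p_i)$ and let $E_d$ be the elliptic curve $y^2=x(x^2+dx-d^2)$ over $\mathbb{Q}$. Then $\operatorname{rk}(E_d(\mathbb{Q}))=0$.
   Context: $E_d$ is the quadratic twist by $d$ of the curve $y^2=x(x^2+x-1)$ (a model of the modular curve $X_1(2,10)$). $\operatorname{rk}$ denotes the Mordell–Weil rank over $\mathbb{Q}$. *)

theory Defs
  imports "HOL-Algebra.FiniteProduct" "HOL-Library.Extended_Nat" "HOL-Computational_Algebra.Primes"
begin

text \<open>Rational points of the Weierstrass curve y^2 = x^3 + a2 x^2 + a4 x + a6 over Q.
  None is the point at infinity O, Some (x,y) an affine point.\<close>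

definition ec_points :: "rat \<Rightarrow> rat \<Rightarrow> rat \<Rightarrow> (rat \<times> rat) option set" where
  "ec_points a2 a4 a6 = {None} \<union>
     {Some (x, y) | x y. y^2 = x^3 + a2 * x^2 + a4 * x + a6}"

fun ec_add :: "rat \<Rightarrow> rat \<Rightarrow> rat \<Rightarrow> (rat \<times> rat) option \<Rightarrow> (rat \<times> rat) option \<Rightarrow> (rat \<times> rat) option" where
  "ec_add a2 a4 a6 None Q = Q"
| "ec_add a2 a4 a6 (Some P) None = Some P"
| "ec_add a2 a4 a6 (Some (x1, y1)) (Some (x2, y2)) =
     (if x1 = x2 \<and> y1 = - y2 then None
      else (let l = (if x1 = x2 then (3 * x1^2 + 2 * a2 * x1 + a4) / (2 * y1)
                     else (y2 - y1) / (x2 - x1));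
                x3 = l^2 - a2 - x1 - x2
            in Some (x3, - (l * (x3 - x1) + y1))))"

definition ec_group :: "rat \<Rightarrow> rat \<Rightarrow> rat \<Rightarrow> (rat \<times> rat) option monoid" where
  "ec_group a2 a4 a6 = \<lparr>carrier = ec_points a2 a4 a6, monoid.mult = ec_add a2 a4 a6, one = None\<rparr>"

definition ec_independent :: "rat \<Rightarrow> rat \<Rightarrow> rat \<Rightarrow> (rat \<times> rat) option set \<Rightarrow> bool" where
  "ec_independent a2 a4 a6 S \<longleftrightarrow> finite S \<and> S \<subseteq> ec_points a2 a4 a6 \<and>
     (\<forall>c :: (rat \<times> rat) option \<Rightarrow> int.
        finprod (ec_group a2 a4 a6) (\<lambda>P. P [^]\<^bsub>ec_group a2 a4 a6\<^esub> c P) S = None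
        \<longrightarrow> (\<forall>P\<in>S. c P = 0))"

definition ec_rank :: "rat \<Rightarrow> rat \<Rightarrow> rat \<Rightarrow> enat" where
  "ec_rank a2 a4 a6 = Sup {enat (card S) | S. ec_independent a2 a4 a6 S}"

end

(* Let E be y^2 = x (x^2 + d x - d^2) and E' the 2-isogenous curve Y^2 = X (X^2 - 2 d X + 5 d^2),
   with phi : E -> E' the isogeny with kernel {O, (0,0)} and psi : E' -> E its dual.
   If x = a/b in lowest terms is the abscissa of a point of E, then a b (a^2 + d a b - d^2 b^2) is a
   square; as 5 is not a square modulo any prime factor of d, b is a square and a is plus or minus a
   square.  After translating by (0,0) the abscissa is a square, so the point lies in psi(E').
   Likewise, as -1 is not a square modulo these primes, abscissas on E' are squares or 5 times
   squares, and after translation the point lies in phi(E).  Denominators of abscissas do not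
   decrease under psi, and they increase strictly under phi at a square abscissa (again because -1
   is a nonresidue, and |d| >= 2).  This is an infinite descent on the denominator of phi(x), so
   E(Q) = {O, (0,0)}: every point has order at most 2 and the rank is 0. *)

theory Submission
  imports Defs "HOL-Number_Theory.Number_Theory" "HOL-Computational_Algebra.Nth_Powers"
    "HOL-Computational_Algebra.Squarefree"
begin

section \<open>Quadratic nonresidues\<close>

lemma nonresidue_dvd_diff_sq_imp_dvd:
  fixes p c x z :: int
  assumes p: "prime p" and nonres: "\<not> QuadRes p c" and dvd: "p dvd x^2 - c * z^2"
  shows "p dvd z"
proof (rule ccontr)
  assume "\<not> p dvd z"
  then have "coprime z p"
    using p by (simp add: prime_imp_coprime ac_simps)
  then obtain i where i: "[z * i = 1] (mod p)"
    using cong_solve_coprime_int by blast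
  have "[x^2 = c * z^2] (mod p)"
    using dvd by (simp add: cong_iff_dvd_diff)
  then have "[x^2 * i^2 = c * z^2 * i^2] (mod p)"
    by (rule cong_mult) (rule cong_refl)
  then have "[(x * i)^2 = c * (z * i)^2] (mod p)"
    by (simp add: power_mult_distrib mult.assoc)
  also have "[c * (z * i)^2 = c * 1^2] (mod p)"
    using i by (intro cong_mult cong_refl cong_pow)
  finally have "[(x * i)^2 = c] (mod p)"
    by simp
  with nonres show False
    unfolding QuadRes_def by blast
qed

lemma nonresidue_sq_eq_mult_sq_imp_0:
  fixes p c x z :: int
  assumes "\<not> QuadRes p c" and eq: "x^2 = c * z^2"
  shows "z = 0"
proof (rule ccontr)
  assume "z \<noteq> 0"
  have "z^2 dvd x^2"
    using eq by simp
  then have "z dvd x"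
    by simp
  then obtain k where "x = z * k" ..
  with eq \<open>z \<noteq> 0\<close> have "c = k^2"
    by (simp add: power_mult_distrib)
  then have "QuadRes p c"
    unfolding QuadRes_def by (auto intro!: exI[of _ k])
  with assms(1) show False ..
qed

lemma not_QuadRes_mult_square:
  fixes p c k :: int
  assumes "prime p" "\<not> QuadRes p c" "\<not> p dvd k"
  shows "\<not> QuadRes p (c * k^2)"
proof
  assume "QuadRes p (c * k^2)"
  then obtain y where "[y^2 = c * k^2] (mod p)"
    unfolding QuadRes_def by blast
  then have "p dvd y^2 - c * k^2"
    by (simp add: cong_iff_dvd_diff)
  then have "p dvd k"
    using nonresidue_dvd_diff_sq_imp_dvd assms(1,2) by blast
  with assms(3) show False ..
qed

lemma not_QuadRes_minus_one:
  fixes p :: nat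
  assumes p: "prime p" and p4: "p mod 4 = 3"
  shows "\<not> QuadRes (int p) (-1)"
proof
  assume "QuadRes (int p) (-1)"
  have p2: "2 < p"
    using p4 prime_gt_1_nat[OF p] by (cases "p = 2") auto
  have "\<not> [-1 = 0] (mod int p)"
    using p2 by (simp add: cong_iff_dvd_diff)
  with \<open>QuadRes (int p) (-1)\<close> have "Legendre (-1) (int p) = 1"
    unfolding Legendre_def by simp
  moreover have "odd ((p - 1) div 2)"
    using p4 by presburger
  ultimately have "[1 = -1] (mod int p)"
    using euler_criterion[OF p p2, of "-1"] by simp
  then have "int p dvd 2"
    by (simp add: cong_iff_dvd_diff)
  then have "int p \<le> 2"
    by (rule zdvd_imp_le) simp
  with p2 show False
    by simp
qed

lemma not_QuadRes_five:
  fixes p :: nat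
  assumes p: "prime p" and p2: "2 < p" and p5: "p mod 5 = 2 \<or> p mod 5 = 3"
  shows "\<not> QuadRes (int p) 5"
proof
  assume res: "QuadRes (int p) 5"
  have "{2..<5::nat} = {2, 3, 4}"
    by auto
  then have prime5: "prime (5::nat)"
    by (simp add: prime_nat_iff')
  have "p \<noteq> 5"
    using p5 by auto
  have "\<not> [5 = 0] (mod int p)"
  proof
    assume "[5 = 0] (mod int p)"
    then have "p dvd 5"
      by (simp add: cong_iff_dvd_diff flip: int_dvd_int_iff)
    then show False
      using p prime5 \<open>p \<noteq> 5\<close> by (simp add: primes_dvd_imp_eq)
  qed
  with res have L5p: "Legendre 5 (int p) = 1"
    unfolding Legendre_def by simp
  have "\<not> QuadRes 5 (int p)"
  proof
    assume "QuadRes 5 (int p)"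
    then obtain y where "[y^2 = int p] (mod 5)"
      unfolding QuadRes_def by blast
    then have "(y mod 5)^2 mod 5 = int (p mod 5)"
      by (simp add: cong_def power_mod of_nat_mod)
    moreover have "y mod 5 \<in> {0, 1, 2, 3, 4}"
      by auto
    ultimately show False
      using p5 by (auto simp: power2_eq_square)
  qed
  moreover have "\<not> [int p = 0] (mod 5)"
    using p5 unfolding cong_0_iff by presburger
  ultimately have Lp5: "Legendre (int p) 5 = -1"
    unfolding Legendre_def by simp
  have "Legendre (int p) 5 * Legendre 5 (int p) = 1"
    using Quadratic_Reciprocity[OF p p2 prime5 _ \<open>p \<noteq> 5\<close>] by simp
  with L5p Lp5 show False
    by simp
qed

section \<open>Square classes of values of binary quadratic forms\<close>

lemma coprime_square_add_mult:
  fixes m n t :: int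
  assumes "coprime m n"
  shows "coprime (m^2 + n * t) n"
proof -
  have "coprime (m^2) n"
    using assms by simp
  then show ?thesis
    by (metis add.commute coprime_iff_gcd_eq_1 gcd.commute gcd_add_mult mult.commute)
qed

lemma even_multiplicity_square_product:
  fixes p x y w z :: int
  assumes p: "prime p" and z: "z^2 = x * y * w" and nz: "x * y * w \<noteq> 0"
  shows "even (multiplicity p x + multiplicity p y + multiplicity p w)"
proof -
  have pe: "prime_elem p"
    using p by (rule prime_imp_prime_elem)
  from nz have "x \<noteq> 0" "y \<noteq> 0" "w \<noteq> 0" "z \<noteq> 0"
    using z by auto
  then have "multiplicity p x + multiplicity p y + multiplicity p w = multiplicity p (z^2)"
    using z by (simp add: prime_elem_multiplicity_mult_distrib[OF pe])
  also have "\<dots> = 2 * multiplicity p z"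
    using \<open>z \<noteq> 0\<close> by (simp add: prime_elem_multiplicity_power_distrib[OF pe])
  finally show ?thesis
    by simp
qed

lemma squarefree_part_dvd_if_even_multiplicity:
  fixes v x :: int
  assumes "v \<noteq> 0" and even: "\<And>p. prime p \<Longrightarrow> \<not> p dvd v \<Longrightarrow> even (multiplicity p x)"
  shows "squarefree_part x dvd v"
proof -
  have "multiplicity p (squarefree_part x) \<le> multiplicity p v" if p: "prime p" for p
  proof (cases "p dvd v")
    case True
    moreover have "\<not> is_unit p"
      using p not_prime_unit by blast
    ultimately have "0 < multiplicity p v"
      using multiplicity_gt_zero_iff[OF assms(1)] by blast
    then show ?thesis
      using prime_multiplicity_squarefree_part_le_Suc_0[OF p, of x] by linarith
  next
    case False
    then show ?thesis
      using even[OF p False] by (simp add: prime_multiplicity_squarefree_part[OF p])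
  qed
  then show ?thesis
    using assms(1) by (simp add: prime_multiplicity_le_imp_dvd)
qed

lemma nonresidue_dvd_form_imp_dvd:
  fixes p u v a b c :: int
  assumes p: "prime p" and nonres: "\<not> QuadRes p (u^2 - 4 * v)"
    and dvd: "p dvd a^2 + u * c * a * b + v * c^2 * b^2"
  shows "p dvd c * b"
proof -
  have "4 * (a^2 + u * c * a * b + v * c^2 * b^2) = (2 * a + u * c * b)^2 - (u^2 - 4 * v) * (c * b)^2"
    by (simp add: algebra_simps power2_eq_square)
  moreover have "p dvd 4 * (a^2 + u * c * a * b + v * c^2 * b^2)"
    using dvd by (rule dvd_mult)
  ultimately show ?thesis
    using nonresidue_dvd_diff_sq_imp_dvd[OF p nonres] by metis
qed

lemma multiplicity_form_eq_2:
  fixes p u v a b d :: int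
  assumes p: "prime p" and nonres: "\<not> QuadRes p (u^2 - 4 * v)"
    and "p dvd a" "p dvd d" "\<not> p dvd b" "\<not> p^2 dvd d"
  shows "multiplicity p (a^2 + u * d * a * b + v * d^2 * b^2) = 2"
proof -
  obtain a' d' where a: "a = p * a'" and d: "d = p * d'"
    using assms(3,4) by (auto elim!: dvdE)
  have "\<not> p dvd d'"
    using \<open>\<not> p^2 dvd d\<close> unfolding d by (auto simp: power2_eq_square)
  then have "\<not> p dvd a'^2 + u * d' * a' * b + v * d'^2 * b^2"
    using nonresidue_dvd_form_imp_dvd[OF p nonres] \<open>\<not> p dvd b\<close> p
    by (auto simp: prime_dvd_mult_iff)
  then have "\<not> p^2 * p dvd p^2 * (a'^2 + u * d' * a' * b + v * d'^2 * b^2)"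
    using p by simp
  moreover have "a^2 + u * d * a * b + v * d^2 * b^2 = p^2 * (a'^2 + u * d' * a' * b + v * d'^2 * b^2)"
    unfolding a d by (simp add: algebra_simps power2_eq_square)
  ultimately show ?thesis
    by (intro multiplicity_eqI) (simp, metis power_Suc2)
qed

lemma form_nonzero:
  fixes a b d u v p :: int
  assumes "\<not> QuadRes p (u^2 - 4 * v)" "d \<noteq> 0" "b \<noteq> 0"
  shows "a^2 + u * d * a * b + v * d^2 * b^2 \<noteq> 0"
proof
  assume "a^2 + u * d * a * b + v * d^2 * b^2 = 0"
  moreover have "4 * (a^2 + u * d * a * b + v * d^2 * b^2) = (2 * a + u * d * b)^2 - (u^2 - 4 * v) * (d * b)^2"
    by (simp add: algebra_simps power2_eq_square)
  ultimately have "(2 * a + u * d * b)^2 = (u^2 - 4 * v) * (d * b)^2"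
    by simp
  then have "d * b = 0"
    using nonresidue_sq_eq_mult_sq_imp_0[OF assms(1)] by blast
  with assms(2,3) show False
    by simp
qed

lemma prime_not_dvd_form:
  fixes a b d u v p :: int
  assumes "prime p" "p dvd a" "\<not> p dvd v" "\<not> p dvd d" "\<not> p dvd b"
  shows "\<not> p dvd a^2 + u * d * a * b + v * d^2 * b^2"
proof
  assume "p dvd a^2 + u * d * a * b + v * d^2 * b^2"
  moreover have "v * d^2 * b^2 = (a^2 + u * d * a * b + v * d^2 * b^2) - a * (a + u * d * b)"
    by (simp add: algebra_simps power2_eq_square)
  ultimately have "p dvd v * d^2 * b^2"
    using \<open>p dvd a\<close> by (metis dvd_diff dvd_mult2)
  with assms show False
    by (simp add: prime_dvd_mult_iff prime_dvd_power_iff)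
qed

lemma square_product_imp_square_classes:
  fixes a b d u v z :: int
  assumes sqf: "squarefree d" and "\<not> is_unit d"
    and nonres: "\<And>p. prime p \<Longrightarrow> p dvd d \<Longrightarrow> \<not> QuadRes p (u^2 - 4 * v)"
    and "0 < b" "a \<noteq> 0" "coprime a b"
    and z: "z^2 = a * b * (a^2 + u * d * a * b + v * d^2 * b^2)"
  shows "\<forall>p. prime p \<longrightarrow> even (multiplicity p b)"
    and "\<forall>p. prime p \<longrightarrow> \<not> p dvd v \<longrightarrow> even (multiplicity p a)"
proof -
  define K where "K = a^2 + u * d * a * b + v * d^2 * b^2"
  have "d \<noteq> 0"
    using sqf by auto
  then obtain q where "prime q" "q dvd d"
    using prime_divisor_exists \<open>\<not> is_unit d\<close> by blast
  then have "K \<noteq> 0"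
    using form_nonzero[OF nonres] \<open>d \<noteq> 0\<close> \<open>0 < b\<close> by (simp add: K_def)
  then have parity: "even (multiplicity p a + multiplicity p b + multiplicity p K)" if "prime p" for p
    using even_multiplicity_square_product[OF that z[folded K_def]] \<open>0 < b\<close> \<open>a \<noteq> 0\<close> by simp
  have "coprime K b"
    using coprime_square_add_mult[OF \<open>coprime a b\<close>, of "u * d * a + v * d^2 * b"]
    by (simp add: K_def algebra_simps power2_eq_square)
  show "\<forall>p. prime p \<longrightarrow> even (multiplicity p b)"
  proof (intro allI impI)
    fix p :: int
    assume p: "prime p"
    show "even (multiplicity p b)"
    proof (cases "p dvd b")
      case True
      then have "\<not> p dvd a" "\<not> p dvd K"
        using p \<open>coprime a b\<close> \<open>coprime K b\<close> by (meson coprime_common_divisor not_prime_unit)+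
      then show ?thesis
        using parity[OF p] by (simp add: not_dvd_imp_multiplicity_0)
    qed (simp add: not_dvd_imp_multiplicity_0)
  qed
  show "\<forall>p. prime p \<longrightarrow> \<not> p dvd v \<longrightarrow> even (multiplicity p a)"
  proof (intro allI impI)
    fix p :: int
    assume p: "prime p" and "\<not> p dvd v"
    show "even (multiplicity p a)"
    proof (cases "p dvd a")
      case True
      then have "\<not> p dvd b"
        using p \<open>coprime a b\<close> by (meson coprime_common_divisor not_prime_unit)
      have "multiplicity p K = 2 \<or> multiplicity p K = 0"
      proof (cases "p dvd d")
        case True
        have "\<not> p^2 dvd d"
          using sqf p by (meson squarefreeD not_prime_unit)
        then show ?thesis
          using multiplicity_form_eq_2[OF p nonres[OF p True] \<open>p dvd a\<close> True \<open>\<not> p dvd b\<close>]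
          by (simp add: K_def)
      next
        case False
        then show ?thesis
          using prime_not_dvd_form[OF p \<open>p dvd a\<close> \<open>\<not> p dvd v\<close> False \<open>\<not> p dvd b\<close>]
          by (simp add: K_def not_dvd_imp_multiplicity_0)
      qed
      then show ?thesis
        using parity[OF p] \<open>\<not> p dvd b\<close> by (auto simp: not_dvd_imp_multiplicity_0)
    qed (simp add: not_dvd_imp_multiplicity_0)
  qed
qed

section \<open>Denominators of rational numbers\<close>

definition denom :: "rat \<Rightarrow> int" where
  "denom x = snd (quotient_of x)"

lemma denom_pos: "0 < denom x"
  unfolding denom_def by (rule quotient_of_denom_pos')

lemma quotient_of_eqI:
  assumes "x = of_int a / of_int b" "0 < b" "coprime a b"
  shows "quotient_of x = (a, b)"
  using assms by (simp add: Fract_of_int_quotient[symmetric] quotient_of_Fract normalize_def)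

lemma quotient_of_square:
  assumes "quotient_of r = (M, e)"
  shows "quotient_of (r^2) = (M^2, e^2)"
proof (rule quotient_of_eqI)
  show "r^2 = of_int (M^2) / of_int (e^2)"
    using quotient_of_div[OF assms] by (simp add: power_divide)
  show "0 < e^2" "coprime (M^2) (e^2)"
    using quotient_of_denom_pos[OF assms] quotient_of_coprime[OF assms] by simp_all
qed

lemma mult_denom_in_Ints: "x * of_int (denom x) \<in> \<int>"
proof -
  obtain a b where ab: "quotient_of x = (a, b)"
    by (cases "quotient_of x")
  moreover have "x = of_int a / of_int b"
    by (rule quotient_of_div[OF ab])
  ultimately have "x * of_int (denom x) = of_int a"
    using quotient_of_denom_pos[OF ab] by (simp add: denom_def)
  then show ?thesis
    by simp
qed

lemma dvd_denom_if_coprime: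
  fixes a b n :: int
  assumes "coprime a n" "n dvd b" "b \<noteq> 0"
  shows "n dvd denom (of_int a / of_int b)"
proof -
  obtain a' b' where q: "quotient_of (of_int a / of_int b) = (a', b')"
    by (cases "quotient_of (of_int a / of_int b)")
  have "0 < b'"
    using quotient_of_denom_pos[OF q] .
  have "(of_int a / of_int b :: rat) = of_int a' / of_int b'"
    by (rule quotient_of_div[OF q])
  then have "(of_int (a * b') :: rat) = of_int (a' * b)"
    using \<open>b \<noteq> 0\<close> \<open>0 < b'\<close> by (simp add: field_simps)
  then have "a * b' = a' * b"
    by (simp only: of_int_eq_iff)
  then have "n dvd a * b'"
    using \<open>n dvd b\<close> by simp
  then have "n dvd b'"
    using \<open>coprime a n\<close> by (simp add: coprime_commute coprime_dvd_mult_right_iff)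
  then show ?thesis
    by (simp add: denom_def q)
qed

lemma square_eq_of_int_imp_Ints:
  fixes q :: rat
  assumes "q^2 = of_int k"
  shows "q \<in> \<int>"
proof -
  obtain a b where ab: "quotient_of q = (a, b)"
    by (cases "quotient_of q")
  have "0 < b" "coprime a b" "q = of_int a / of_int b"
    using ab by (simp_all add: quotient_of_denom_pos quotient_of_coprime quotient_of_div)
  with assms have "(of_int (a^2) :: rat) = of_int (k * b^2)"
    by (simp add: field_simps power2_eq_square)
  then have "b^2 dvd a^2"
    by (simp only: of_int_eq_iff) simp
  then have "b dvd a"
    by simp
  with \<open>coprime a b\<close> have "is_unit b"
    by (metis coprime_common_divisor dvd_refl)
  with \<open>0 < b\<close> have "b = 1"
    by simp
  then show ?thesis
    using \<open>q = of_int a / of_int b\<close> by simp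
qed

section \<open>The curves y^2 = x^3 + A x^2 + B x and their 2-isogenies\<close>

definition on_curve :: "rat \<Rightarrow> rat \<Rightarrow> rat \<Rightarrow> rat \<Rightarrow> bool" where
  "on_curve A B x y \<longleftrightarrow> y^2 = x^3 + A * x^2 + B * x"

lemma Some_in_ec_points_iff: "Some (x, y) \<in> ec_points A B 0 \<longleftrightarrow> on_curve A B x y"
  by (simp add: ec_points_def on_curve_def)

lemma on_curve_clear_denominators:
  fixes \<alpha> \<beta> a b :: int
  assumes E: "on_curve (of_int \<alpha>) (of_int \<beta>) x y" and ab: "quotient_of x = (a, b)"
  obtains z where "z^2 = a * b * (a^2 + \<alpha> * a * b + \<beta> * b^2)"
proof -
  have "0 < b" "x = of_int a / of_int b"
    using ab by (simp_all add: quotient_of_denom_pos quotient_of_div)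
  then have xb: "x * of_int b = of_int a"
    by simp
  have "(y * of_int b^2)^2 = y^2 * of_int b^4"
    by (simp add: power_mult_distrib flip: power_mult)
  also have "\<dots> = (x * of_int b)^3 * of_int b + of_int \<alpha> * (x * of_int b)^2 * of_int b^2
      + of_int \<beta> * (x * of_int b) * of_int b^3"
    using E by (simp add: on_curve_def algebra_simps power2_eq_square power3_eq_cube power4_eq_xxxx)
  also have "\<dots> = of_int (a * b * (a^2 + \<alpha> * a * b + \<beta> * b^2))"
    unfolding xb by (simp add: algebra_simps power2_eq_square power3_eq_cube)
  finally have "(y * of_int b^2)^2 = of_int (a * b * (a^2 + \<alpha> * a * b + \<beta> * b^2))" .
  moreover from this obtain z where "y * of_int b^2 = of_int z"
    by (metis square_eq_of_int_imp_Ints Ints_cases)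
  ultimately show ?thesis
    using that by (metis of_int_eq_iff of_int_power)
qed

lemma on_curve_x_square_class:
  fixes d u v :: int
  assumes sqf: "squarefree d" and nonunit: "\<not> is_unit d"
    and nonres: "\<And>p. prime p \<Longrightarrow> p dvd d \<Longrightarrow> \<not> QuadRes p (u^2 - 4 * v)" and "v \<noteq> 0"
    and E: "on_curve (of_int (u * d)) (of_int (v * d^2)) x y" and "x \<noteq> 0"
  obtains q r where "q dvd v" "x = of_int q * r^2"
proof -
  obtain a b where ab: "quotient_of x = (a, b)"
    by (cases "quotient_of x")
  have "0 < b" "coprime a b" and x: "x = of_int a / of_int b"
    using ab by (simp_all add: quotient_of_denom_pos quotient_of_coprime quotient_of_div)
  with \<open>x \<noteq> 0\<close> have "a \<noteq> 0"
    by auto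
  obtain z where "z^2 = a * b * (a^2 + u * d * a * b + v * d^2 * b^2)"
    using on_curve_clear_denominators[OF E ab] by blast
  note classes = square_product_imp_square_classes[OF sqf nonunit nonres \<open>0 < b\<close> \<open>a \<noteq> 0\<close> \<open>coprime a b\<close> this]
  have "is_nth_power 2 (normalize b)"
    using is_nth_power_conv_multiplicity[of 2 b] classes(1) by auto
  then obtain w where w: "b = w^2"
    using \<open>0 < b\<close> by (auto elim!: is_nth_powerE)
  have "(of_int a :: rat) = of_int (squarefree_part a * square_part a ^ 2)"
    by (simp only: squarefree_decompose[symmetric])
  then have "x = of_int (squarefree_part a) * (of_int (square_part a) / of_int w)^2"
    using x w by (simp add: power_divide)
  moreover have "squarefree_part a dvd v"
    using classes(2) \<open>v \<noteq> 0\<close> by (intro squarefree_part_dvd_if_even_multiplicity) auto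
  ultimately show ?thesis
    using that by blast
qed

(* The x-coordinate of the 2-isogeny from y^2 = x^3 + A x^2 + B x to
   y^2 = x^3 - 2 A x^2 + (A^2 - 4 B) x with kernel {O, (0,0)}. *)
definition isog_x :: "rat \<Rightarrow> rat \<Rightarrow> rat \<Rightarrow> rat" where
  "isog_x A B x = (x^2 + A * x + B) / x"

(* The same construction applied to the image curve lands on y^2 = x^3 + 4 A x^2 + 16 B x,
   which x |-> x / 4 identifies with the original curve. *)
definition dual_isog_x :: "rat \<Rightarrow> rat \<Rightarrow> rat \<Rightarrow> rat" where
  "dual_isog_x A B X = isog_x (-2 * A) (A^2 - 4 * B) X / 4"

(* (B / x, - B y / x^2) is the sum of (x, y) and the 2-torsion point (0, 0). *)
lemma on_curve_translate:
  assumes E: "on_curve A B x y" and "x \<noteq> 0"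
  shows "on_curve A B (B / x) (- B * y / x^2)"
proof -
  have "(- B * y / x^2)^2 = B^2 * y^2 / x^4"
    by (simp add: power_divide power_mult_distrib flip: power_mult)
  also have "\<dots> = B^2 * (x^3 + A * x^2 + B * x) / x^4"
    using E by (simp add: on_curve_def)
  also have "\<dots> = (B / x)^3 + A * (B / x)^2 + B * (B / x)"
    using \<open>x \<noteq> 0\<close> by (simp add: field_simps power2_eq_square power3_eq_cube power4_eq_xxxx)
  finally show ?thesis
    by (simp add: on_curve_def)
qed

lemma isog_x_translate:
  assumes "x \<noteq> 0" "B \<noteq> 0"
  shows "isog_x A B (B / x) = isog_x A B x"
  using assms by (simp add: isog_x_def field_simps power2_eq_square)

lemma exists_square_x_same_isog_x:
  assumes E: "on_curve A B x y" and "x \<noteq> 0" and B: "B = c * t^2" and "t \<noteq> 0"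
    and x: "x = r^2 \<or> x = c * r^2"
  obtains s y' where "s \<noteq> 0" "on_curve A B (s^2) y'" "isog_x A B (s^2) = isog_x A B x"
proof (cases "x = r^2")
  case True
  with \<open>x \<noteq> 0\<close> E show ?thesis
    using that by auto
next
  case False
  with x have "x = c * r^2"
    by blast
  with \<open>x \<noteq> 0\<close> \<open>t \<noteq> 0\<close> have "c \<noteq> 0" "r \<noteq> 0" "B \<noteq> 0" "t / r \<noteq> 0"
    using B by auto
  moreover from \<open>x = c * r^2\<close> have "B / x = (t / r)^2"
    using B \<open>c \<noteq> 0\<close> by (simp add: power_divide)
  ultimately show ?thesis
    using that on_curve_translate[OF E \<open>x \<noteq> 0\<close>] isog_x_translate[OF \<open>x \<noteq> 0\<close>] by metis
qed

lemma exists_dual_isog_preimage: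
  assumes E: "on_curve A B (r^2) y" and "r \<noteq> 0" and "A^2 - 4 * B \<noteq> 0"
  obtains X Y where "X \<noteq> 0" "on_curve (-2 * A) (A^2 - 4 * B) X Y" "dual_isog_x A B X = r^2"
proof -
  define w where "w = y / r"
  have "y^2 = r^2 * (r^4 + A * r^2 + B)"
    using E by (simp add: on_curve_def algebra_simps power2_eq_square power3_eq_cube power4_eq_xxxx)
  then have w2: "w^2 = r^4 + A * r^2 + B"
    using \<open>r \<noteq> 0\<close> by (simp add: w_def power_divide)
  \<comment> \<open>a root of X^2 - 2 (A + 2 r^2) X + A^2 - 4 B, the equation dual_isog_x A B X = r^2\<close>
  define X where "X = A + 2 * r^2 + 2 * w"
  have "X^2 - 2 * A * X + (A^2 - 4 * B) - 4 * r^2 * X = 4 * (w^2 - (r^4 + A * r^2 + B))"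
    unfolding X_def by (simp add: algebra_simps power2_eq_square power4_eq_xxxx)
  with w2 have X: "X^2 - 2 * A * X + (A^2 - 4 * B) = 4 * r^2 * X"
    by simp
  have "X \<noteq> 0"
    using X \<open>A^2 - 4 * B \<noteq> 0\<close> by auto
  have "(2 * r * X)^2 = X * (X^2 - 2 * A * X + (A^2 - 4 * B))"
    unfolding X by (simp add: algebra_simps power2_eq_square)
  then have "on_curve (-2 * A) (A^2 - 4 * B) X (2 * r * X)"
    by (simp add: on_curve_def algebra_simps power2_eq_square power3_eq_cube)
  moreover have "dual_isog_x A B X = r^2"
    using X \<open>X \<noteq> 0\<close> by (simp add: dual_isog_x_def isog_x_def)
  ultimately show ?thesis
    using that \<open>X \<noteq> 0\<close> by blast
qed

lemma exists_isog_preimage: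
  assumes E': "on_curve (-2 * A) (A^2 - 4 * B) (s^2) Y" and "s \<noteq> 0" and "B \<noteq> 0"
  obtains x y where "x \<noteq> 0" "on_curve A B x y" "isog_x A B x = s^2"
proof -
  define w where "w = Y / s"
  have "Y^2 = s^2 * (s^4 - 2 * A * s^2 + (A^2 - 4 * B))"
    using E' by (simp add: on_curve_def algebra_simps power2_eq_square power3_eq_cube power4_eq_xxxx)
  then have w2: "w^2 = s^4 - 2 * A * s^2 + (A^2 - 4 * B)"
    using \<open>s \<noteq> 0\<close> by (simp add: w_def power_divide)
  \<comment> \<open>a root of x^2 + (A - s^2) x + B, the equation isog_x A B x = s^2\<close>
  define x where "x = (s^2 - A + w) / 2"
  have "4 * (x^2 + A * x + B - s^2 * x) = w^2 - (s^4 - 2 * A * s^2 + (A^2 - 4 * B))"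
    unfolding x_def by (simp add: field_simps power2_eq_square power4_eq_xxxx)
  with w2 have x: "x^2 + A * x + B = s^2 * x"
    by simp
  have "x \<noteq> 0"
    using x \<open>B \<noteq> 0\<close> by auto
  have "(s * x)^2 = x * (x^2 + A * x + B)"
    unfolding x by (simp add: algebra_simps power2_eq_square)
  then have "on_curve A B x (s * x)"
    by (simp add: on_curve_def algebra_simps power2_eq_square power3_eq_cube)
  moreover have "isog_x A B x = s^2"
    using x \<open>x \<noteq> 0\<close> by (simp add: isog_x_def)
  ultimately show ?thesis
    using that \<open>x \<noteq> 0\<close> by blast
qed

lemma denom_dvd_denom_rational_map:
  fixes \<alpha> \<beta> c :: int
  assumes "x \<noteq> 0" "c \<noteq> 0"
  shows "denom x dvd denom ((x^2 + of_int \<alpha> * x + of_int \<beta>) / (of_int c * x))"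
proof -
  obtain m n where mn: "quotient_of x = (m, n)"
    by (cases "quotient_of x")
  have "0 < n" "coprime m n" and x: "x = of_int m / of_int n"
    using mn by (simp_all add: quotient_of_denom_pos quotient_of_coprime quotient_of_div)
  with \<open>x \<noteq> 0\<close> have "m \<noteq> 0"
    by auto
  have "(x^2 + of_int \<alpha> * x + of_int \<beta>) / (of_int c * x)
      = of_int (m^2 + n * (\<alpha> * m + \<beta> * n)) / of_int (c * m * n)"
    using \<open>0 < n\<close> \<open>m \<noteq> 0\<close> \<open>c \<noteq> 0\<close> unfolding x by (simp add: field_simps power2_eq_square)
  moreover have "n dvd denom (of_int (m^2 + n * (\<alpha> * m + \<beta> * n)) / of_int (c * m * n))"
    using coprime_square_add_mult[OF \<open>coprime m n\<close>] \<open>0 < n\<close> \<open>m \<noteq> 0\<close> \<open>c \<noteq> 0\<close>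
    by (intro dvd_denom_if_coprime) auto
  ultimately show ?thesis
    by (simp add: denom_def mn)
qed

section \<open>Rank of a curve whose rational points have order two\<close>

lemma finprod_eq_one_if_left_neutral:
  assumes "\<one>\<^bsub>G\<^esub> \<in> carrier G" and neutral: "\<And>y. y \<in> carrier G \<Longrightarrow> \<one>\<^bsub>G\<^esub> \<otimes>\<^bsub>G\<^esub> y = y"
    and f: "\<And>x. x \<in> A \<Longrightarrow> f x = \<one>\<^bsub>G\<^esub>"
  shows "finprod G f A = \<one>\<^bsub>G\<^esub>"
proof (cases "finite A")
  case True
  interpret LCD A "carrier G" "monoid.mult G \<circ> f"
    by standard (simp_all add: f neutral)
  have "foldD (carrier G) (monoid.mult G \<circ> f) \<one>\<^bsub>G\<^esub> B = \<one>\<^bsub>G\<^esub>" if "finite B" "B \<subseteq> A" for B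
    using that by (induction B rule: finite_induct) (simp_all add: assms foldD_insert)
  with True show ?thesis
    by (simp add: finprod_def)
qed (simp add: finprod_def)

lemma ec_rank_eq_0_if_2_torsion:
  assumes y0: "\<And>x y. Some (x, y) \<in> ec_points a2 a4 a6 \<Longrightarrow> y = 0"
  shows "ec_rank a2 a4 a6 = 0"
proof -
  let ?G = "ec_group a2 a4 a6"
  have double: "P [^]\<^bsub>?G\<^esub> (2::int) = None" if "P \<in> ec_points a2 a4 a6" for P
    using that y0 by (cases P) (auto simp: int_pow_def ec_group_def numeral_2_eq_2)
  have indep_iff: "ec_independent a2 a4 a6 S \<longleftrightarrow> S = {}" for S
  proof
    assume indep: "ec_independent a2 a4 a6 S"
    then have "S \<subseteq> ec_points a2 a4 a6"
      by (simp add: ec_independent_def)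
    then have "finprod ?G (\<lambda>P. P [^]\<^bsub>?G\<^esub> (2::int)) S = \<one>\<^bsub>?G\<^esub>"
      using double by (intro finprod_eq_one_if_left_neutral) (auto simp: ec_group_def ec_points_def)
    moreover have "\<one>\<^bsub>?G\<^esub> = None"
      by (simp add: ec_group_def)
    ultimately have "\<forall>P\<in>S. (2::int) = 0"
      using indep unfolding ec_independent_def by (elim conjE allE[of _ "\<lambda>_. 2"]) simp
    then show "S = {}"
      by auto
  qed (simp add: ec_independent_def)
  then show ?thesis
    by (simp add: ec_rank_def zero_enat_def)
qed

section \<open>Descent on the twists\<close>

lemma one_add_sub_square_neg:
  fixes D :: int
  assumes "2 \<le> \<bar>D\<bar>"
  shows "1 + D - D^2 < 0"
proof -
  have "\<bar>D\<bar> * 2 \<le> \<bar>D\<bar> * \<bar>D\<bar>"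
    using assms by (intro mult_left_mono) auto
  then have "\<bar>D\<bar> * 2 \<le> D * D"
    by (simp add: abs_mult_self_eq)
  then show ?thesis
    unfolding power2_eq_square using abs_ge_self[of D] assms by linarith
qed

(* Every prime factor of d is inert both in Q(i) and in Q(sqrt 5). *)
locale inert_twist =
  fixes d :: int
  assumes abs_ge_2: "2 \<le> \<bar>d\<bar>"
    and squarefree: "squarefree d"
    and nonresidue_minus_one: "\<And>p. prime p \<Longrightarrow> p dvd d \<Longrightarrow> \<not> QuadRes p (-1)"
    and nonresidue_five: "\<And>p. prime p \<Longrightarrow> p dvd d \<Longrightarrow> \<not> QuadRes p 5"
begin

abbreviation on_E :: "rat \<Rightarrow> rat \<Rightarrow> bool" where
  "on_E \<equiv> on_curve (of_int d) (- (of_int d ^ 2))"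

abbreviation on_E' :: "rat \<Rightarrow> rat \<Rightarrow> bool" where
  "on_E' \<equiv> on_curve (-2 * of_int d) (5 * of_int d ^ 2)"

abbreviation phi :: "rat \<Rightarrow> rat" where
  "phi \<equiv> isog_x (of_int d) (- (of_int d ^ 2))"

abbreviation psi :: "rat \<Rightarrow> rat" where
  "psi \<equiv> dual_isog_x (of_int d) (- (of_int d ^ 2))"

lemma nonzero: "d \<noteq> 0"
  using abs_ge_2 by auto

lemma not_unit: "\<not> is_unit d"
  using abs_ge_2 by auto

lemma prime_dvd_imp_not_dvd_2:
  assumes "prime p" "p dvd d"
  shows "\<not> p dvd 2"
proof
  assume "p dvd 2"
  then have "[1^2 = -1] (mod p)"
    by (simp add: cong_iff_dvd_diff)
  then have "QuadRes p (-1)"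
    unfolding QuadRes_def by blast
  with nonresidue_minus_one assms show False
    by blast
qed

lemma isogenous_coeff: "(of_int d :: rat)^2 - 4 * (- (of_int d ^ 2)) = 5 * of_int d ^ 2"
  by simp

lemma psi_eq: "psi X = isog_x (-2 * of_int d) (5 * of_int d ^ 2) X / 4"
  by (simp add: dual_isog_x_def)

lemma E_x_square_class:
  assumes "on_E x y" "x \<noteq> 0"
  obtains r where "x = r^2 \<or> x = -1 * r^2"
proof -
  have E: "on_curve (of_int (1 * d)) (of_int (-1 * d^2)) x y"
    using assms(1) by simp
  have nonres: "\<not> QuadRes p (1^2 - 4 * -1)" if "prime p" "p dvd d" for p
    using nonresidue_five that by simp
  have "(-1::int) \<noteq> 0"
    by simp
  from on_curve_x_square_class[OF squarefree not_unit nonres this E assms(2)]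
  obtain q r where "q dvd -1" and x: "x = of_int q * r^2" .
  then have "q = 1 \<or> q = -1"
    by (simp add: zdvd1_eq abs_eq_iff')
  with x have "x = r^2 \<or> x = -1 * r^2"
    by auto
  then show ?thesis
    by (rule that)
qed

lemma E'_x_square_class:
  assumes E': "on_E' X Y" and "X \<noteq> 0"
  obtains s where "X = s^2 \<or> X = 5 * s^2"
proof -
  have E: "on_curve (of_int (-2 * d)) (of_int (5 * d^2)) X Y"
    using E' by simp
  have nonres: "\<not> QuadRes p ((-2)^2 - 4 * 5)" if p: "prime p" "p dvd d" for p
  proof -
    have "(4::int) = 2 * 2"
      by simp
    then have "\<not> p dvd 4"
      using prime_dvd_imp_not_dvd_2[OF p] p(1) by (metis prime_dvd_mult_iff)
    then show ?thesis
      using not_QuadRes_mult_square[OF p(1) nonresidue_minus_one[OF p], of 4] by simp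
  qed
  have "(5::int) \<noteq> 0"
    by simp
  from on_curve_x_square_class[OF squarefree not_unit nonres this E \<open>X \<noteq> 0\<close>]
  obtain q s where q: "q dvd 5" and X: "X = of_int q * s^2" .
  have "Y^2 = X * ((X - of_int d)^2 + 4 * of_int d ^ 2)"
    using E' by (simp add: on_curve_def algebra_simps power2_eq_square power3_eq_cube)
  moreover have "0 < (X - of_int d)^2 + 4 * of_int d ^ 2"
    using nonzero by (simp add: add_nonneg_pos)
  ultimately have "0 \<le> X"
    by (metis zero_le_power2 zero_le_mult_iff not_less)
  with \<open>X \<noteq> 0\<close> have "0 < of_int q * s^2"
    unfolding X by linarith
  then have "0 < q"
    using zero_le_power2[of s] by (auto simp: zero_less_mult_iff)
  moreover have "q \<le> 5"
    using q by (simp add: zdvd_imp_le)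
  ultimately have "q \<in> {1, 2, 3, 4, 5}"
    by auto
  with q have "q = 1 \<or> q = 5"
    by auto
  with X have "X = s^2 \<or> X = 5 * s^2"
    by auto
  then show ?thesis
    by (rule that)
qed

lemma is_unit_if_square_eq_quartic:
  fixes M k e N :: int
  assumes d: "d = M * k" and "coprime M e" "M \<noteq> 0"
    and N: "N^2 = M^2 + M * k * e^2 - k^2 * e^4"
  shows "is_unit M"
proof (rule ccontr)
  assume "\<not> is_unit M"
  then obtain p where p: "prime p" "p dvd M"
    using prime_divisor_exists \<open>M \<noteq> 0\<close> by blast
  then have "p dvd d"
    by (simp add: d)
  have "\<not> p dvd k"
    using squarefree p unfolding d by (metis mult_dvd_mono power2_eq_square squarefreeD not_prime_unit)
  have "\<not> p dvd e"
    using p \<open>coprime M e\<close> by (meson coprime_common_divisor not_prime_unit)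
  have "N^2 - (-1) * (k * e^2)^2 = M * (M + k * e^2)"
    using N by (simp add: algebra_simps power2_eq_square power4_eq_xxxx)
  then have "p dvd N^2 - (-1) * (k * e^2)^2"
    using p(2) by simp
  then have "p dvd k * e^2"
    using nonresidue_dvd_diff_sq_imp_dvd[OF p(1) nonresidue_minus_one[OF p(1) \<open>p dvd d\<close>]] by blast
  with \<open>\<not> p dvd k\<close> \<open>\<not> p dvd e\<close> p(1) show False
    by (simp add: prime_dvd_mult_iff prime_dvd_power_iff)
qed

lemma square_not_dvd_quartic:
  fixes M e N :: int
  assumes "coprime M e" "M \<noteq> 0" "e \<noteq> 0" and N: "N^2 = M^4 + d * M^2 * e^2 - d^2 * e^4"
  shows "\<not> M^2 dvd M^4 + d * M^2 * e^2 - d^2 * e^4"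
proof
  assume "M^2 dvd M^4 + d * M^2 * e^2 - d^2 * e^4"
  moreover have "d^2 * e^4 = M^2 * (M^2 + d * e^2) - (M^4 + d * M^2 * e^2 - d^2 * e^4)"
    by (simp add: algebra_simps power2_eq_square power4_eq_xxxx)
  ultimately have "M^2 dvd d^2 * e^4"
    by (metis dvd_diff dvd_triv_left)
  moreover have "coprime (M^2) (e^4)"
    using \<open>coprime M e\<close> by simp
  ultimately have "M dvd d"
    by (simp add: coprime_dvd_mult_left_iff)
  then obtain k where d: "d = M * k" ..
  have N_eq: "N^2 = M^2 * (M^2 + M * k * e^2 - k^2 * e^4)"
    using N unfolding d by (simp add: algebra_simps power2_eq_square power4_eq_xxxx)
  then have "M^2 dvd N^2"
    by simp
  then have "M dvd N"
    by simp
  then obtain N' where "N = M * N'" ..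
  with N_eq \<open>M \<noteq> 0\<close> have N': "N'^2 = M^2 + M * k * e^2 - k^2 * e^4"
    by (simp add: power_mult_distrib)
  have "is_unit M"
    using is_unit_if_square_eq_quartic[OF d \<open>coprime M e\<close> \<open>M \<noteq> 0\<close> N'] .
  then have "M = 1 \<or> M = -1"
    by (auto simp: zdvd1_eq abs_if split: if_splits)
  then have "N'^2 = 1 + d * e^2 - (d * e^2)^2"
    using N' unfolding d by (elim disjE) (simp_all add: algebra_simps power2_eq_square power4_eq_xxxx)
  moreover have "2 \<le> \<bar>d * e^2\<bar>"
  proof -
    have "\<bar>d\<bar> * 1 \<le> \<bar>d\<bar> * e^2"
      using \<open>e \<noteq> 0\<close> by (intro mult_left_mono) (simp_all add: int_one_le_iff_zero_less)
    then show ?thesis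
      using abs_ge_2 by (simp add: abs_mult)
  qed
  ultimately show False
    using one_add_sub_square_neg[of "d * e^2"] by (metis not_less zero_le_power2)
qed

lemma on_E_square_x_imp_quartic_square:
  assumes E: "on_E (r^2) y" and "r \<noteq> 0" and Me: "quotient_of r = (M, e)"
  obtains N where "N^2 = M^4 + d * M^2 * e^2 - d^2 * e^4"
proof -
  have "0 < e" and r: "r = of_int M / of_int e"
    using Me by (simp_all add: quotient_of_denom_pos quotient_of_div)
  with \<open>r \<noteq> 0\<close> have "M \<noteq> 0"
    by auto
  have "quotient_of (r^2) = (M^2, e^2)"
    using Me by (rule quotient_of_square)
  moreover have "on_curve (of_int d) (of_int (- (d^2))) (r^2) y"
    using E by simp
  ultimately obtain z where "z^2 = M^2 * e^2 * ((M^2)^2 + d * M^2 * e^2 + - (d^2) * (e^2)^2)"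
    using on_curve_clear_denominators by blast
  then have z: "z^2 = (M * e)^2 * (M^4 + d * M^2 * e^2 - d^2 * e^4)"
    by (simp add: algebra_simps power2_eq_square power4_eq_xxxx)
  then have "(M * e)^2 dvd z^2"
    by simp
  then have "M * e dvd z"
    by simp
  then obtain N where "z = M * e * N" ..
  with z \<open>M \<noteq> 0\<close> \<open>0 < e\<close> have "N^2 = M^4 + d * M^2 * e^2 - d^2 * e^4"
    by (simp add: power_mult_distrib)
  then show ?thesis
    using that by blast
qed

lemma denom_lt_denom_phi:
  assumes E: "on_E (r^2) y" and "r \<noteq> 0"
  shows "denom (r^2) < denom (phi (r^2))"
proof -
  obtain M e where Me: "quotient_of r = (M, e)"
    by (cases "quotient_of r")
  have "0 < e" "coprime M e" and r: "r = of_int M / of_int e"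
    using Me by (simp_all add: quotient_of_denom_pos quotient_of_coprime quotient_of_div)
  with \<open>r \<noteq> 0\<close> have "M \<noteq> 0"
    by auto
  define K where "K = M^4 + d * M^2 * e^2 - d^2 * e^4"
  obtain N where "N^2 = K"
    using on_E_square_x_imp_quartic_square[OF E \<open>r \<noteq> 0\<close> Me] unfolding K_def by blast
  then have not_dvd: "\<not> M^2 dvd K"
    using square_not_dvd_quartic[OF \<open>coprime M e\<close> \<open>M \<noteq> 0\<close>] \<open>0 < e\<close> by (simp add: K_def)
  have phi_eq: "phi (r^2) = of_int K / of_int (M^2 * e^2)"
    using \<open>M \<noteq> 0\<close> \<open>0 < e\<close> unfolding r K_def
    by (simp add: isog_x_def field_simps power2_eq_square power4_eq_xxxx)
  have "denom (r^2) dvd denom (phi (r^2))"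
    using denom_dvd_denom_rational_map[of "r^2" 1 d "- (d^2)"] \<open>r \<noteq> 0\<close> by (simp add: isog_x_def)
  moreover have "denom (phi (r^2)) \<noteq> denom (r^2)"
  proof
    assume "denom (phi (r^2)) = denom (r^2)"
    also have "denom (r^2) = e^2"
      by (simp add: denom_def quotient_of_square[OF Me])
    finally have "phi (r^2) * of_int (e^2) \<in> \<int>"
      using mult_denom_in_Ints[of "phi (r^2)"] by simp
    moreover have "phi (r^2) * of_int (e^2) = of_int K / of_int (M^2)"
      using \<open>0 < e\<close> by (simp add: phi_eq)
    ultimately obtain k where "of_int K / of_int (M^2) = (of_int k :: rat)"
      by (auto elim: Ints_cases)
    with \<open>M \<noteq> 0\<close> have "K = k * M^2"
      by (simp add: field_simps flip: of_int_mult of_int_power of_int_eq_iff)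
    with not_dvd show False
      by simp
  qed
  ultimately show ?thesis
    using denom_pos[of "phi (r^2)"] by (simp add: zdvd_imp_le order_less_le)
qed

lemma denom_le_denom_psi:
  assumes "X \<noteq> 0"
  shows "denom X \<le> denom (psi X)"
proof -
  have "psi X = (X^2 + of_int (-2 * d) * X + of_int (5 * d^2)) / (of_int 4 * X)"
    by (simp add: psi_eq isog_x_def)
  then have "denom X dvd denom (psi X)"
    using denom_dvd_denom_rational_map[of X 4 "-2 * d" "5 * d^2"] assms by simp
  then show ?thesis
    using denom_pos by (simp add: zdvd_imp_le)
qed

lemma descent_step:
  assumes E: "on_E x y" and "x \<noteq> 0"
  obtains x' y' where "on_E x' y'" "x' \<noteq> 0" "denom (phi x') < denom (phi x)"
proof -
  have d: "of_int d \<noteq> (0::rat)" and B: "- (of_int d ^ 2) = -1 * (of_int d :: rat)^2"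
    using nonzero by simp_all
  obtain r y1 where r: "r \<noteq> 0" "on_E (r^2) y1" "phi (r^2) = phi x"
    using E_x_square_class[OF E \<open>x \<noteq> 0\<close>] exists_square_x_same_isog_x[OF E \<open>x \<noteq> 0\<close> B d]
    by metis
  have "(of_int d :: rat)^2 - 4 * (- (of_int d ^ 2)) \<noteq> 0"
    using d by (simp add: isogenous_coeff)
  then obtain X Y where X: "X \<noteq> 0" "on_E' X Y" "psi X = r^2"
    using exists_dual_isog_preimage[OF r(2) r(1)] unfolding isogenous_coeff by blast
  obtain s Y' where s: "s \<noteq> 0" "on_E' (s^2) Y'" "psi (s^2) = psi X"
    using E'_x_square_class[OF X(2) X(1)] exists_square_x_same_isog_x[OF X(2) X(1) refl d]
    unfolding psi_eq by metis
  obtain x' y' where x': "x' \<noteq> 0" "on_E x' y'" "phi x' = s^2"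
    using exists_isog_preimage[of "of_int d" "- (of_int d ^ 2)" s Y'] s(1,2) d
    unfolding isogenous_coeff by auto
  have "denom (phi x') \<le> denom (psi (s^2))"
    using denom_le_denom_psi[of "s^2"] s(1) x'(3) by simp
  also have "\<dots> = denom (r^2)"
    using s(3) X(3) by simp
  also have "\<dots> < denom (phi (r^2))"
    using denom_lt_denom_phi[OF r(2) r(1)] .
  also have "\<dots> = denom (phi x)"
    using r(3) by simp
  finally show ?thesis
    using that x'(1,2) by blast
qed

lemma on_E_imp_x_eq_0: "on_E x y \<Longrightarrow> x = 0"
proof (induction "nat (denom (phi x))" arbitrary: x y rule: less_induct)
  case less
  show ?case
  proof (rule ccontr)
    assume "x \<noteq> 0"
    with less.prems obtain x' y' where "on_E x' y'" "x' \<noteq> 0" "denom (phi x') < denom (phi x)"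
      by (rule descent_step)
    with less.hyps[of x' y'] denom_pos[of "phi x'"] show False
      by simp
  qed
qed

lemma ec_rank_eq_0: "ec_rank (of_int d) (- of_int (d^2)) 0 = 0"
proof (rule ec_rank_eq_0_if_2_torsion)
  fix x y
  assume "Some (x, y) \<in> ec_points (of_int d) (- of_int (d^2)) 0"
  then have "on_E x y"
    by (simp add: Some_in_ec_points_iff)
  then show "y = 0"
    using on_E_imp_x_eq_0[OF \<open>on_E x y\<close>] by (simp add: on_curve_def)
qed

end

lemma inert_twist_prod_neg_primes:
  fixes P :: "nat set"
  assumes fin: "finite P" and "P \<noteq> {}"
    and P: "\<forall>p\<in>P. prime p \<and> (p mod 20 = 3 \<or> p mod 20 = 7)"
  shows "inert_twist (\<Prod>p\<in>P. - int p)"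
proof -
  define d where "d = (\<Prod>p\<in>P. - int p)"
  have residues: "prime p \<and> 2 < p \<and> p mod 4 = 3 \<and> (p mod 5 = 2 \<or> p mod 5 = 3)" if "p \<in> P" for p
  proof -
    have "prime p" "p mod 20 = 3 \<or> p mod 20 = 7"
      using P that by simp_all
    moreover from this(2) have "2 < p \<and> p mod 4 = 3 \<and> (p mod 5 = 2 \<or> p mod 5 = 3)"
      by presburger
    ultimately show ?thesis
      by simp
  qed
  have factor: "\<exists>p\<in>P. q = int p" if q: "prime q" "q dvd d" for q :: int
  proof -
    from q(2) obtain p where "p \<in> P" "q dvd - int p"
      unfolding d_def prime_dvd_prod_iff[OF fin q(1)] ..
    moreover from \<open>p \<in> P\<close> have "prime (int p)"
      using residues[of p] by simp
    ultimately have "q = int p"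
      using q(1) by (simp add: primes_dvd_imp_eq)
    with \<open>p \<in> P\<close> show ?thesis ..
  qed
  have "d \<noteq> 0"
    using fin residues unfolding d_def by (subst prod_zero_iff) auto
  show ?thesis
    unfolding d_def[symmetric]
  proof
    obtain p where "p \<in> P"
      using \<open>P \<noteq> {}\<close> by blast
    have "- int p dvd d"
      unfolding d_def using fin \<open>p \<in> P\<close> by (rule dvd_prodI)
    then have "int p \<le> \<bar>d\<bar>"
      using \<open>d \<noteq> 0\<close> dvd_imp_le_int[of d "int p"] by simp
    with residues[OF \<open>p \<in> P\<close>] show "2 \<le> \<bar>d\<bar>"
      by linarith
  next
    show "squarefree d"
      unfolding d_def
    proof (rule squarefree_prod_coprime)
      fix p q
      assume "p \<in> P" "q \<in> P" "p \<noteq> q"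
      then show "coprime (- int p) (- int q)"
        using residues primes_coprime[of p q] by simp
    next
      fix p
      assume "p \<in> P"
      then show "squarefree (- int p)"
        using residues squarefree_prime[of "int p"] by simp
    qed
  next
    fix q :: int
    assume "prime q" "q dvd d"
    then obtain p where "p \<in> P" "q = int p"
      using factor by blast
    have "\<not> QuadRes (int p) (-1)"
      using residues[OF \<open>p \<in> P\<close>] by (intro not_QuadRes_minus_one) simp_all
    with \<open>q = int p\<close> show "\<not> QuadRes q (-1)"
      by simp
  next
    fix q :: int
    assume "prime q" "q dvd d"
    then obtain p where "p \<in> P" "q = int p"
      using factor by blast
    have "\<not> QuadRes (int p) 5"
      using residues[OF \<open>p \<in> P\<close>] by (intro not_QuadRes_five) simp_all
    with \<open>q = int p\<close> show "\<not> QuadRes q 5"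
      by simp
  qed
qed

theorem proposition2p11:
  fixes P :: "nat set" and d :: int
  assumes "finite P" and "P \<noteq> {}"
    and "\<forall>p\<in>P. prime p \<and> (p mod 20 = 3 \<or> p mod 20 = 7)"
    and "d = (\<Prod>p\<in>P. - int p)"
  shows "ec_rank (of_int d) (- (of_int (d ^ 2))) 0 = 0"
proof -
  interpret inert_twist d
    using inert_twist_prod_neg_primes[OF assms(1-3)] assms(4) by simp
  show ?thesis
    by (rule ec_rank_eq_0)
qed

end
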